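(* Let $X$ be a proper, path connected metric space, let $S$ be a discrete subset of $X$, let $x_0\in S$, and let $n$ be an integer with $2\le n\le \#(S)$. Then every continuous path in $X$ from $x_0$ to a point of $B_n(x_0)$ intersects $B_{n-1}(x_0)$.
   Context: $(X,d)$ is a metric space. It is proper if for every $x\in X$ the function $d(x,\cdot)$ is a proper map (in particular every closed ball is compact). A subset $S\subseteq X$ is discrete if every compact subset of $X$ contains only finitely many points of $S$. For $x\in X$ and $r>0$ write $N_r(x)=\{y\in X: d(x,y)<r\}$ and $C_r(x)=\{y\in X: d(x,y)=r\}$; $\#(\cdot)$ denotes cardinality. For $x_0\in S$, a positive integer $n\le\#(S)$, and $x\in X$ with $r=d(x,x_0)$, define: $x\in B_n(x_0)$ iff $\#(N_r(x)\cap S)=m$ and $\#(C_r(x)\cap S)=\ell$ for some integers $m\ge 0$, $\ell\ge 1$ with $m+1\le n\le m+\ell$. *)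

theory Defs
  imports "HOL-Analysis.Analysis"
begin

text \<open>The metric space X is the whole carrier (UNIV) of a metric_space type.\<close>

definition proper_metric :: "'a::metric_space itself \<Rightarrow> bool" where
  "proper_metric _ \<longleftrightarrow>
     (\<forall>x::'a. \<forall>K::real set. compact K \<longrightarrow> compact {y::'a. dist x y \<in> K})"

definition discrete_subset :: "'a::metric_space set \<Rightarrow> bool" where
  "discrete_subset S \<longleftrightarrow> (\<forall>K. compact K \<longrightarrow> finite (K \<inter> S))"

text \<open>B_n(x0): with r = d(x,x0), N_r(x) = ball x r, C_r(x) = sphere x r.\<close>
definition B_set :: "'a::metric_space set \<Rightarrow> 'a \<Rightarrow> nat \<Rightarrow> 'a set" where
  "B_set S x0 n = {x. let r = dist x x0 in
     \<exists>m l. finite (ball x r \<inter> S) \<and> card (ball x r \<inter> S) = m \<and>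
           finite (sphere x r \<inter> S) \<and> card (sphere x r \<inter> S) = l \<and>
           l \<ge> 1 \<and> m + 1 \<le> n \<and> n \<le> m + l}"

end

theory Submission
  imports Defs
begin

text \<open>
  Let F x and H x (cball_count, ball_count) be the numbers of points of S in the closed and in
  the open ball around x of radius d(x, x0), so that B_k(x0) = {x. H x < k \<le> F x}. Since S meets
  every ball in a finite set, F is upper and H lower semicontinuous: a point of S outside the
  closed ball around x stays outside for all y near x, and one inside the open ball stays inside.
  Hence U = {F < k} and V = {H \<ge> k} are open and disjoint, and they cover X - B_k(x0). A path
  from x0 (where H = 0) to a point of B_(k+1)(x0) (where F > k) avoiding B_k(x0) would lie in
  U \<union> V and meet both, contradicting connectedness of its image.
\<close>

definition cball_count :: "'a::metric_space set \<Rightarrow> 'a \<Rightarrow> 'a \<Rightarrow> nat" where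
  "cball_count S x0 x = card (cball x (dist x x0) \<inter> S)"

definition ball_count :: "'a::metric_space set \<Rightarrow> 'a \<Rightarrow> 'a \<Rightarrow> nat" where
  "ball_count S x0 x = card (ball x (dist x x0) \<inter> S)"

lemma finite_cball_Int_discrete_subset:
  fixes S :: "'a::metric_space set"
  assumes "proper_metric TYPE('a)" and "discrete_subset S"
  shows "finite (cball x e \<inter> S)"
proof -
  have "compact {y::'a. dist x y \<in> {0..e}}"
    using assms(1) unfolding proper_metric_def by blast
  moreover have "{y::'a. dist x y \<in> {0..e}} = cball x e"
    by (auto simp: cball_def)
  ultimately show ?thesis
    using assms(2) unfolding discrete_subset_def by auto
qed

lemma eventually_cball_Int_subset:
  fixes S :: "'a::metric_space set"
  assumes "finite (cball x (dist x a + 2) \<inter> S)"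
  shows "\<forall>\<^sub>F y in nhds x. cball y (dist y a) \<inter> S \<subseteq> cball x (dist x a) \<inter> S"
proof -
  \<comment> \<open>For y within distance 1 of x, only the finitely many points in Q can enter the closed ball.\<close>
  define Q where "Q = cball x (dist x a + 2) \<inter> S - cball x (dist x a)"
  have "finite Q"
    unfolding Q_def using assms by blast
  moreover have "\<forall>\<^sub>F y in nhds x. dist y a < dist y s" if "s \<in> Q" for s
  proof -
    have "((\<lambda>y. dist y s - dist y a) \<longlongrightarrow> dist x s - dist x a) (nhds x)"
      by (intro tendsto_intros filterlim_ident)
    moreover have "0 < dist x s - dist x a"
      using that unfolding Q_def by auto
    ultimately have "\<forall>\<^sub>F y in nhds x. 0 < dist y s - dist y a"
      by (rule order_tendstoD(1))
    then show ?thesis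
      by (rule eventually_mono) simp
  qed
  ultimately have far: "\<forall>\<^sub>F y in nhds x. \<forall>s\<in>Q. dist y a < dist y s"
    by (simp add: eventually_ball_finite_distrib)
  have near: "\<forall>\<^sub>F y in nhds x. dist y x < 1"
    unfolding eventually_nhds_metric by (intro exI[of _ 1]) auto
  show ?thesis
  proof (rule eventually_mono[OF eventually_conj[OF far near]], safe)
    fix y s
    assume y: "\<forall>s\<in>Q. dist y a < dist y s" "dist y x < 1"
      and s: "s \<in> cball y (dist y a)" "s \<in> S"
    have "dist x s \<le> dist x a + 2"
      using s(1) y(2) dist_triangle[of x s y] dist_triangle[of y a x] dist_commute[of x y]
      by simp
    moreover have "s \<notin> Q"
      using y(1) s(1) by force
    ultimately show "s \<in> cball x (dist x a)"
      using s(2) unfolding Q_def by simp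
  qed
qed

lemma eventually_ball_Int_subset:
  fixes S :: "'a::metric_space set"
  assumes "finite (ball x (dist x a) \<inter> S)"
  shows "\<forall>\<^sub>F y in nhds x. ball x (dist x a) \<inter> S \<subseteq> ball y (dist y a) \<inter> S"
proof -
  have "\<forall>\<^sub>F y in nhds x. dist y s < dist y a" if "s \<in> ball x (dist x a) \<inter> S" for s
  proof -
    have "((\<lambda>y. dist y a - dist y s) \<longlongrightarrow> dist x a - dist x s) (nhds x)"
      by (intro tendsto_intros filterlim_ident)
    moreover have "0 < dist x a - dist x s"
      using that by auto
    ultimately have "\<forall>\<^sub>F y in nhds x. 0 < dist y a - dist y s"
      by (rule order_tendstoD(1))
    then show ?thesis
      by (rule eventually_mono) simp
  qed
  then have "\<forall>\<^sub>F y in nhds x. \<forall>s\<in>ball x (dist x a) \<inter> S. dist y s < dist y a"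
    using assms by (simp add: eventually_ball_finite_distrib)
  then show ?thesis
    by (rule eventually_mono) auto
qed

lemma open_eventually_nhds:
  fixes U :: "'a::topological_space set"
  assumes "\<And>x. x \<in> U \<Longrightarrow> \<forall>\<^sub>F y in nhds x. y \<in> U"
  shows "open U"
  using assms unfolding eventually_nhds by (subst open_subopen) blast

lemma open_cball_count_less:
  fixes S :: "'a::metric_space set"
  assumes "\<And>x e. finite (cball x e \<inter> S)"
  shows "open {x. cball_count S x0 x < k}"
proof (rule open_eventually_nhds)
  fix x assume "x \<in> {x. cball_count S x0 x < k}"
  moreover have "\<forall>\<^sub>F y in nhds x. cball_count S x0 y \<le> cball_count S x0 x"
    using eventually_cball_Int_subset[where x=x and a=x0, OF assms]
    by (rule eventually_mono) (simp add: cball_count_def card_mono assms)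
  ultimately show "\<forall>\<^sub>F y in nhds x. y \<in> {x. cball_count S x0 x < k}"
    by (auto elim: eventually_mono)
qed

lemma open_ball_count_ge:
  fixes S :: "'a::metric_space set"
  assumes "\<And>x e. finite (cball x e \<inter> S)"
  shows "open {x. k \<le> ball_count S x0 x}"
proof (rule open_eventually_nhds)
  have fin: "finite (ball x e \<inter> S)" for x e
    using assms[of x e] by (rule finite_subset[rotated]) auto
  fix x assume "x \<in> {x. k \<le> ball_count S x0 x}"
  moreover have "\<forall>\<^sub>F y in nhds x. ball_count S x0 x \<le> ball_count S x0 y"
    using eventually_ball_Int_subset[where x=x and a=x0, OF fin]
    by (rule eventually_mono) (simp add: ball_count_def card_mono fin)
  ultimately show "\<forall>\<^sub>F y in nhds x. y \<in> {x. k \<le> ball_count S x0 x}"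
    by (auto elim: eventually_mono)
qed

lemma B_set_iff_counts:
  fixes S :: "'a::metric_space set"
  assumes "finite (cball x (dist x x0) \<inter> S)"
  shows "x \<in> B_set S x0 k \<longleftrightarrow> ball_count S x0 x < k \<and> k \<le> cball_count S x0 x"
proof -
  let ?r = "dist x x0"
  have fin: "finite (ball x ?r \<inter> S)" "finite (sphere x ?r \<inter> S)"
    using assms by (auto elim!: finite_subset[rotated])
  have "cball x ?r \<inter> S = (ball x ?r \<inter> S) \<union> (sphere x ?r \<inter> S)"
    and "(ball x ?r \<inter> S) \<inter> (sphere x ?r \<inter> S) = {}"
    by auto
  then have "cball_count S x0 x = ball_count S x0 x + card (sphere x ?r \<inter> S)"
    unfolding cball_count_def ball_count_def by (simp add: card_Un_disjoint fin)
  then show ?thesis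
    unfolding B_set_def ball_count_def Let_def using fin by auto
qed

lemma path_to_B_set_Suc_meets_B_set:
  fixes S :: "'a::metric_space set"
  assumes fin: "\<And>x e. finite (cball x e \<inter> S)"
    and "1 \<le> k"
    and "path g" and "pathstart g = x0" and "pathfinish g \<in> B_set S x0 (Suc k)"
  shows "path_image g \<inter> B_set S x0 k \<noteq> {}"
proof
  assume avoid: "path_image g \<inter> B_set S x0 k = {}"
  note B_iff = B_set_iff_counts[OF fin]
  define U where "U = {x. cball_count S x0 x < k}"
  define V where "V = {x. k \<le> ball_count S x0 x}"
  have "ball_count S x0 x \<le> cball_count S x0 x" for x
    unfolding ball_count_def cball_count_def by (intro card_mono fin) auto
  then have "x \<notin> U \<inter> V" for x
    unfolding U_def V_def using le_less_trans by fastforce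
  then have disjoint: "U \<inter> V \<inter> path_image g = {}"
    by blast
  have cover: "path_image g \<subseteq> U \<union> V"
  proof
    fix x assume "x \<in> path_image g"
    then have "x \<notin> B_set S x0 k"
      using avoid by blast
    then show "x \<in> U \<union> V"
      unfolding U_def V_def B_iff by auto
  qed
  have "x0 \<notin> V"
    using \<open>1 \<le> k\<close> unfolding V_def ball_count_def by simp
  have "pathfinish g \<notin> U"
    using \<open>pathfinish g \<in> B_set S x0 (Suc k)\<close> unfolding U_def B_iff by auto
  have "x0 \<in> U \<inter> path_image g"
    using cover \<open>x0 \<notin> V\<close> pathstart_in_path_image[of g] \<open>pathstart g = x0\<close> by auto
  moreover have "pathfinish g \<in> V \<inter> path_image g"
    using cover \<open>pathfinish g \<notin> U\<close> pathfinish_in_path_image[of g] by auto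
  ultimately show False
    using connectedD[OF connected_path_image[OF \<open>path g\<close>] _ _ disjoint cover]
      open_cball_count_less[OF fin] open_ball_count_ge[OF fin]
    unfolding U_def V_def by blast
qed

theorem mainTheorem3:
  fixes S :: "'a::metric_space set" and x0 :: 'a and n :: nat
    and g :: "real \<Rightarrow> 'a"
  assumes "proper_metric TYPE('a)"
    and "path_connected (UNIV :: 'a set)"
    and "discrete_subset S"
    and "x0 \<in> S"
    and "2 \<le> n"
    and "infinite S \<or> n \<le> card S"
    and "path g" and "pathstart g = x0" and "pathfinish g \<in> B_set S x0 n"
  shows "path_image g \<inter> B_set S x0 (n - 1) \<noteq> {}"
proof (rule path_to_B_set_Suc_meets_B_set)
  show "finite (cball x e \<inter> S)" for x e
    using finite_cball_Int_discrete_subset[OF assms(1,3)] .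
  show "pathfinish g \<in> B_set S x0 (Suc (n - 1))"
    using assms(5,9) by (simp add: Suc_diff_Suc numeral_2_eq_2)
qed (use assms in auto)

end
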